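(* If there exists a continuum that is not coastal, then there exists a continuum $Y$ and a null-aposyndetic point $y\in Y$ such that $Y$ is not coastal at $y$.
   Context: A continuum is a nondegenerate compact connected Hausdorff space. $\kappa(x;p)$ denotes the union of all subcontinua $M\neq X$ of $X$ with $x\in M$ and $p\notin M$. $X$ is coastal at $x$ if $\kappa(x;p)$ is dense in $X$ for some $p\neq x$, and coastal if it is coastal at every point. A point $x\in X$ is null-aposyndetic if no proper subcontinuum of $X$ contains $x$ in its interior. *)

theory Defs
  imports "HOL-Analysis.Analysis"
begin

definition continuum :: "'a topology \<Rightarrow> bool" where
  "continuum X \<longleftrightarrow> compact_space X \<and> connected_space X \<and> Hausdorff_space X
     \<and> (\<exists>x\<in>topspace X. \<exists>y\<in>topspace X. x \<noteq> y)"

text \<open>A subcontinuum of X: a nonempty compact connected subset (degenerate ones allowed).\<close>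
definition subcontinuum :: "'a topology \<Rightarrow> 'a set \<Rightarrow> bool" where
  "subcontinuum X M \<longleftrightarrow> M \<noteq> {} \<and> compactin X M \<and> connectedin X M"

definition kappa :: "'a topology \<Rightarrow> 'a \<Rightarrow> 'a \<Rightarrow> 'a set" where
  "kappa X x p = \<Union>{M. subcontinuum X M \<and> M \<noteq> topspace X \<and> x \<in> M \<and> p \<notin> M}"

definition coastal_at :: "'a topology \<Rightarrow> 'a \<Rightarrow> bool" where
  "coastal_at X x \<longleftrightarrow> (\<exists>p\<in>topspace X. p \<noteq> x \<and> X closure_of (kappa X x p) = topspace X)"

definition coastal :: "'a topology \<Rightarrow> bool" where
  "coastal X \<longleftrightarrow> (\<forall>x\<in>topspace X. coastal_at X x)"

definition null_aposyndetic :: "'a topology \<Rightarrow> 'a \<Rightarrow> bool" where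
  "null_aposyndetic X x \<longleftrightarrow> x \<in> topspace X \<and>
     \<not> (\<exists>M. subcontinuum X M \<and> M \<noteq> topspace X \<and> x \<in> X interior_of M)"

end

theory Submission
  imports Defs
begin

text \<open>Let X be non-coastal at x. Order the proper subcontinua of X through x by
  N \<sqsubseteq> N' iff N = N' or N \<subseteq> int N'. Along a chain without a largest element the
  interiors cover the union, so by compactness the union misses some point p; it then lies in
  \<kappa>(x;p), whose closure is proper, and the closure of the union bounds the chain. Zorn's lemma
  yields a proper subcontinuum M \<ni> x lying in the interior of no proper subcontinuum.
  Collapsing M to a point gives a continuum Y in which subcontinua lift to subcontinua by taking
  preimages, since the quotient map is closed and monotone. Hence the point M of Y is
  null-aposyndetic, and Y is not coastal at M because \<kappa>(M;{p}) computed in Y lies in the image of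
  \<kappa>(x;p), which is not dense.\<close>

section \<open>Quotient topologies\<close>

definition quotient_topology :: "'a topology \<Rightarrow> ('a \<Rightarrow> 'b) \<Rightarrow> 'b topology" where
  "quotient_topology X f =
     topology (\<lambda>U. U \<subseteq> f ` topspace X \<and> openin X {x \<in> topspace X. f x \<in> U})"

lemma istopology_quotient_topology:
  "istopology (\<lambda>U. U \<subseteq> f ` topspace X \<and> openin X {x \<in> topspace X. f x \<in> U})"
proof -
  have "{x \<in> topspace X. f x \<in> S \<inter> T} = {x \<in> topspace X. f x \<in> S} \<inter> {x \<in> topspace X. f x \<in> T}"
    for S T by blast
  moreover have "{x \<in> topspace X. f x \<in> \<Union>\<K>} = (\<Union>S\<in>\<K>. {x \<in> topspace X. f x \<in> S})" for \<K>
    by blast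
  ultimately show ?thesis
    unfolding istopology_def by auto
qed

lemma openin_quotient_topology:
  "openin (quotient_topology X f) U \<longleftrightarrow>
     U \<subseteq> f ` topspace X \<and> openin X {x \<in> topspace X. f x \<in> U}"
  unfolding quotient_topology_def topology_inverse'[OF istopology_quotient_topology] ..

lemma topspace_quotient_topology: "topspace (quotient_topology X f) = f ` topspace X"
proof -
  have "{x \<in> topspace X. f x \<in> f ` topspace X} = topspace X"
    by blast
  then have "openin (quotient_topology X f) (f ` topspace X)"
    by (simp add: openin_quotient_topology)
  then have "f ` topspace X \<subseteq> topspace (quotient_topology X f)"
    by (rule openin_subset)
  moreover have "topspace (quotient_topology X f) \<subseteq> f ` topspace X"
    using openin_quotient_topology[THEN iffD1, OF openin_topspace] by (rule conjunct1)
  ultimately show ?thesis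
    by (rule subset_antisym[rotated])
qed

lemma quotient_map_quotient_topology: "quotient_map X (quotient_topology X f) f"
  unfolding quotient_map_def topspace_quotient_topology openin_quotient_topology by simp

section \<open>Collapsing a subcontinuum to a point\<close>

definition collapse :: "'a set \<Rightarrow> 'a \<Rightarrow> 'a set" where
  "collapse M x = (if x \<in> M then M else {x})"

lemma fibre_collapse:
  "\<lbrakk>M \<subseteq> topspace X; x \<in> topspace X\<rbrakk> \<Longrightarrow> {y \<in> topspace X. collapse M y = collapse M x} = collapse M x"
  unfolding collapse_def by auto

lemma monotone_map_collapse:
  assumes "connectedin X M"
  shows "monotone_map X (quotient_topology X (collapse M)) (collapse M)"
proof -
  have "connectedin X {y \<in> topspace X. collapse M y = collapse M x}" if x: "x \<in> topspace X" for x
  proof -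
    have "connectedin X (collapse M x)"
      using assms x by (simp add: collapse_def connectedin_sing)
    then show ?thesis
      using fibre_collapse[OF connectedin_subset_topspace[OF assms] x] by simp
  qed
  then show ?thesis
    unfolding monotone_map_def topspace_quotient_topology by blast
qed

lemma closed_map_collapse:
  assumes "closedin X M"
  shows "closed_map X (quotient_topology X (collapse M)) (collapse M)"
  unfolding closed_map_def
proof (intro allI impI)
  fix C assume C: "closedin X C"
  have "{x \<in> topspace X. collapse M x \<in> collapse M ` C} = C \<union> (if C \<inter> M = {} then {} else M)"
    using closedin_subset[OF C] closedin_subset[OF assms] by (auto simp: collapse_def image_iff)
  moreover have "closedin X (C \<union> (if C \<inter> M = {} then {} else M))"
    using C assms by (simp add: closedin_Un)
  ultimately have "closedin X {x \<in> topspace X. collapse M x \<in> collapse M ` C}"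
    by simp
  moreover have "collapse M ` C \<subseteq> topspace (quotient_topology X (collapse M))"
    using closedin_subset[OF C] by (auto simp: topspace_quotient_topology)
  moreover have "\<forall>U. U \<subseteq> topspace (quotient_topology X (collapse M)) \<longrightarrow>
      (closedin X {x \<in> topspace X. collapse M x \<in> U} \<longleftrightarrow> closedin (quotient_topology X (collapse M)) U)"
    using quotient_map_quotient_topology[of X "collapse M"] unfolding quotient_map_closedin by (rule conjunct2)
  ultimately show "closedin (quotient_topology X (collapse M)) (collapse M ` C)"
    by blast
qed

lemma Hausdorff_space_collapse:
  assumes "compact_space X" "Hausdorff_space X" "closedin X M"
  shows "Hausdorff_space (quotient_topology X (collapse M))"
proof -
  let ?Y = "quotient_topology X (collapse M)"
  have surj: "collapse M ` topspace X = topspace ?Y"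
    by (simp add: topspace_quotient_topology)
  have closed: "closed_map X ?Y (collapse M)"
    using assms(3) by (rule closed_map_collapse)
  have t1: "t1_space ?Y"
    using t1_space_closed_map_image[OF closed surj Hausdorff_imp_t1_space[OF assms(2)]] .
  have normal: "normal_space X"
    using assms(1,2) by (simp add: compact_Hausdorff_or_regular_imp_normal_space)
  have cont: "continuous_map X ?Y (collapse M)"
    by (rule quotient_imp_continuous_map[OF quotient_map_quotient_topology])
  show ?thesis
    by (rule Hausdorff_normal_space_closed_continuous_map_image[OF normal closed cont surj t1])
qed

lemma subcontinuum_subset_topspace: "subcontinuum X M \<Longrightarrow> M \<subseteq> topspace X"
  by (simp add: subcontinuum_def compactin_subset_topspace)

lemma subcontinuum_imp_closedin: "\<lbrakk>Hausdorff_space X; subcontinuum X M\<rbrakk> \<Longrightarrow> closedin X M"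
  by (simp add: subcontinuum_def compactin_imp_closedin)

lemma continuum_collapse:
  assumes "continuum X" "subcontinuum X M" "M \<noteq> topspace X"
  shows "continuum (quotient_topology X (collapse M))"
proof -
  let ?Y = "quotient_topology X (collapse M)"
  have X: "compact_space X" "connected_space X" "Hausdorff_space X"
    using assms(1) by (auto simp: continuum_def)
  have M: "closedin X M" "M \<subseteq> topspace X" "M \<noteq> {}"
    using subcontinuum_imp_closedin[OF X(3) assms(2)] subcontinuum_subset_topspace[OF assms(2)] assms(2)
    by (auto simp: subcontinuum_def)
  have q: "quotient_map X ?Y (collapse M)"
    by (rule quotient_map_quotient_topology)
  have "compact_space ?Y"
    using image_compactin[OF X(1)[unfolded compact_space_def] quotient_imp_continuous_map[OF q]]
    by (simp add: compact_space_def topspace_quotient_topology)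
  moreover have "connected_space ?Y"
    using connected_space_quotient_map_image[OF q X(2)] .
  moreover have "Hausdorff_space ?Y"
    using Hausdorff_space_collapse[OF X(1,3) M(1)] .
  moreover obtain m z where "m \<in> M" "z \<in> topspace X" "z \<notin> M"
    using M(2,3) assms(3) by blast
  then have "collapse M m \<in> topspace ?Y" "collapse M z \<in> topspace ?Y" "collapse M m \<noteq> collapse M z"
    using M(2) by (auto simp: topspace_quotient_topology collapse_def)
  ultimately show ?thesis
    unfolding continuum_def by blast
qed

lemma subcontinuum_monotone_quotient_preimage:
  assumes f: "quotient_map X Y f" "monotone_map X Y f"
    and "compact_space X" "Hausdorff_space Y" "subcontinuum Y N"
  shows "subcontinuum X {x \<in> topspace X. f x \<in> N}"
proof -
  have N: "closedin Y N" "connectedin Y N" "N \<subseteq> topspace Y" "N \<noteq> {}"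
    using subcontinuum_imp_closedin[OF assms(4,5)] subcontinuum_subset_topspace[OF assms(5)] assms(5)
    by (auto simp: subcontinuum_def)
  have "closedin X {x \<in> topspace X. f x \<in> N}"
    using closedin_continuous_map_preimage[OF quotient_imp_continuous_map[OF f(1)] N(1)] .
  moreover have "connectedin X {x \<in> topspace X. f x \<in> N}"
    by (rule connectedin_monotone_quotient_map_preimage[OF f(2,1) N(2) disjI2[OF N(1)]])
  moreover have "{x \<in> topspace X. f x \<in> N} \<noteq> {}"
  proof -
    obtain y where y: "y \<in> N"
      using N(4) by blast
    then have "y \<in> f ` topspace X"
      using N(3) quotient_imp_surjective_map[OF f(1)] by auto
    then show ?thesis
      using y by blast
  qed
  ultimately show ?thesis
    using closedin_compact_space[OF assms(3)] by (simp add: subcontinuum_def)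
qed

lemma subcontinuum_collapse_preimage:
  assumes "compact_space X" "Hausdorff_space X" "subcontinuum X M"
    and "subcontinuum (quotient_topology X (collapse M)) N"
  shows "subcontinuum X {x \<in> topspace X. collapse M x \<in> N}"
proof (rule subcontinuum_monotone_quotient_preimage[OF quotient_map_quotient_topology _ assms(1) _ assms(4)])
  have "closedin X M" "connectedin X M"
    using assms(3) subcontinuum_imp_closedin[OF assms(2)] by (auto simp: subcontinuum_def)
  then show "monotone_map X (quotient_topology X (collapse M)) (collapse M)"
    and "Hausdorff_space (quotient_topology X (collapse M))"
    using monotone_map_collapse Hausdorff_space_collapse assms(1,2) by blast+
qed

lemma null_aposyndetic_collapse:
  assumes "compact_space X" "Hausdorff_space X" "subcontinuum X M"
    and not_inside: "\<And>N. subcontinuum X N \<Longrightarrow> N \<noteq> topspace X \<Longrightarrow> \<not> M \<subseteq> X interior_of N"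
  shows "null_aposyndetic (quotient_topology X (collapse M)) M"
proof -
  let ?Y = "quotient_topology X (collapse M)"
  have M: "M \<subseteq> topspace X" "M \<noteq> {}"
    using subcontinuum_subset_topspace[OF assms(3)] assms(3) by (auto simp: subcontinuum_def)
  then have "M \<in> topspace ?Y"
    by (auto simp: topspace_quotient_topology collapse_def)
  moreover have False
    if N: "subcontinuum ?Y N" "N \<noteq> topspace ?Y" "M \<in> ?Y interior_of N" for N
  proof -
    define L where "L = {x \<in> topspace X. collapse M x \<in> N}"
    have "subcontinuum X L"
      unfolding L_def using subcontinuum_collapse_preimage[OF assms(1-3) N(1)] .
    moreover have "L \<noteq> topspace X"
    proof
      assume "L = topspace X"
      then have "topspace ?Y \<subseteq> N"
        by (auto simp: L_def topspace_quotient_topology)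
      then show False
        using N(2) subcontinuum_subset_topspace[OF N(1)] by blast
    qed
    moreover have "M \<subseteq> X interior_of L"
    proof -
      let ?V = "{x \<in> topspace X. collapse M x \<in> ?Y interior_of N}"
      have "openin X ?V"
        by (rule openin_continuous_map_preimage[OF
              quotient_imp_continuous_map[OF quotient_map_quotient_topology] openin_interior_of])
      moreover have "?V \<subseteq> L"
        using interior_of_subset[of ?Y N] by (auto simp: L_def)
      moreover have "M \<subseteq> ?V"
        using M(1) N(3) by (auto simp: collapse_def)
      ultimately show ?thesis
        using interior_of_maximal[of ?V L X] by blast
    qed
    ultimately show False
      using not_inside by blast
  qed
  ultimately show ?thesis
    unfolding null_aposyndetic_def by blast
qed

lemma kappa_collapse_subset:
  assumes "compact_space X" "Hausdorff_space X" "subcontinuum X M" "x \<in> M"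
    and p: "p \<in> topspace X" "p \<notin> M"
  shows "kappa (quotient_topology X (collapse M)) M {p} \<subseteq> collapse M ` kappa X x p"
proof
  let ?Y = "quotient_topology X (collapse M)"
  fix R assume "R \<in> kappa ?Y M {p}"
  then obtain N where N: "subcontinuum ?Y N" "M \<in> N" "{p} \<notin> N" "R \<in> N"
    unfolding kappa_def by blast
  define L where "L = {w \<in> topspace X. collapse M w \<in> N}"
  have "subcontinuum X L"
    unfolding L_def by (rule subcontinuum_collapse_preimage[OF assms(1-3) N(1)])
  moreover have "x \<in> L" "p \<notin> L"
    using subcontinuum_subset_topspace[OF assms(3)] assms(4) N(2,3) p(2)
    by (auto simp: L_def collapse_def)
  ultimately have "L \<subseteq> kappa X x p"
    using p(1) unfolding kappa_def by blast
  moreover obtain w where "w \<in> topspace X" "R = collapse M w"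
    using N(4) subcontinuum_subset_topspace[OF N(1)] by (auto simp: topspace_quotient_topology)
  ultimately show "R \<in> collapse M ` kappa X x p"
    using N(4) by (auto simp: L_def)
qed

lemma not_coastal_at_collapse:
  assumes "compact_space X" "Hausdorff_space X" "subcontinuum X M" "x \<in> M" "\<not> coastal_at X x"
  shows "\<not> coastal_at (quotient_topology X (collapse M)) M"
proof
  let ?Y = "quotient_topology X (collapse M)"
  assume "coastal_at ?Y M"
  then obtain q where q: "q \<in> topspace ?Y" "q \<noteq> M" "?Y closure_of kappa ?Y M q = topspace ?Y"
    unfolding coastal_at_def by blast
  then obtain p where p: "p \<in> topspace X" "p \<notin> M" "q = {p}"
    by (auto simp: topspace_quotient_topology collapse_def split: if_splits)
  have M: "closedin X M" "M \<subseteq> topspace X"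
    using subcontinuum_imp_closedin[OF assms(2,3)] subcontinuum_subset_topspace[OF assms(3)] .
  define K where "K = kappa X x p"
  have K: "K \<subseteq> topspace X"
    unfolding K_def kappa_def by (blast dest: subcontinuum_subset_topspace)
  have "p \<noteq> x"
    using assms(4) p(2) by blast
  then have "X closure_of K \<noteq> topspace X"
    using assms(5) p(1) unfolding coastal_at_def K_def by blast
  then obtain z where z: "z \<in> topspace X" "z \<notin> X closure_of K"
    using closure_of_subset_topspace[of X K] by blast
  have "M \<subseteq> K"
    using assms(3,4) p(1,2) unfolding K_def kappa_def by blast
  then have "z \<notin> M"
    using z(2) closure_of_subset[OF K] by blast
  have closed: "closedin ?Y (collapse M ` (X closure_of K))"
    using closed_map_collapse[OF M(1)] unfolding closed_map_def by simp
  have "kappa ?Y M q \<subseteq> collapse M ` K"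
    unfolding K_def p(3) by (rule kappa_collapse_subset[OF assms(1-4) p(1,2)])
  also have "\<dots> \<subseteq> collapse M ` (X closure_of K)"
    using closure_of_subset[OF K] by (rule image_mono)
  finally have "?Y closure_of kappa ?Y M q \<subseteq> collapse M ` (X closure_of K)"
    by (rule closure_of_minimal[OF _ closed])
  moreover have "collapse M z \<in> topspace ?Y"
    using z(1) by (simp add: topspace_quotient_topology)
  moreover have "collapse M z \<notin> collapse M ` (X closure_of K)"
    using z(2) \<open>z \<notin> M\<close> by (auto simp: collapse_def split: if_splits)
  ultimately show False
    using q(3) by blast
qed

section \<open>A subcontinuum in the interior of no proper subcontinuum\<close>

lemma Union_chain_neq_topspace:
  assumes "compact_space X" "chain\<^sub>\<subseteq> C" "C \<noteq> {}"
    and proper: "\<And>c. c \<in> C \<Longrightarrow> c \<subset> topspace X"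
    and inside: "\<And>c. c \<in> C \<Longrightarrow> \<exists>a\<in>C. c \<subseteq> X interior_of a"
  shows "\<Union>C \<noteq> topspace X"
proof
  assume Ueq: "\<Union>C = topspace X"
  have "\<forall>V \<in> (\<lambda>c. X interior_of c) ` C. openin X V"
    by simp
  moreover have "topspace X \<subseteq> \<Union>((\<lambda>c. X interior_of c) ` C)"
    using Ueq inside by blast
  ultimately obtain \<F> where \<F>: "finite \<F>" "\<F> \<subseteq> (\<lambda>c. X interior_of c) ` C" "topspace X \<subseteq> \<Union>\<F>"
    using assms(1)[unfolded compact_space_alt, rule_format, OF conjI] by meson
  then obtain D where D: "D \<subseteq> C" "finite D" "\<F> = (\<lambda>c. X interior_of c) ` D"
    by (meson finite_subset_image)
  have "topspace X \<noteq> {}"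
    using assms(3) proper by blast
  then have "D \<noteq> {}"
    using \<F>(3) D(3) by blast
  moreover have "subset.chain UNIV D"
    using assms(2) D(1) unfolding chain_subset_alt_def subset.chain_def by blast
  ultimately have D_max: "\<Union>D \<in> D"
    by (rule Union_in_chain[OF D(2)])
  have "X interior_of d \<subseteq> X interior_of \<Union>D" if "d \<in> D" for d
    using that by (intro interior_of_mono) blast
  then have "\<Union>\<F> \<subseteq> X interior_of \<Union>D"
    unfolding D(3) by blast
  then have "topspace X \<subseteq> \<Union>D"
    using \<F>(3) interior_of_subset[of X "\<Union>D"] by blast
  then show False
    using proper[of "\<Union>D"] D_max D(1) by blast
qed

lemma closure_Union_proper_subcontinua:
  assumes "compact_space X" "\<not> coastal_at X x" "C \<noteq> {}"
    and C: "C \<subseteq> {N. subcontinuum X N \<and> N \<noteq> topspace X \<and> x \<in> N}"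
    and "\<Union>C \<noteq> topspace X"
  shows "subcontinuum X (X closure_of \<Union>C)" "X closure_of \<Union>C \<noteq> topspace X"
proof -
  have sub: "\<Union>C \<subseteq> topspace X"
    using C by (blast dest: subcontinuum_subset_topspace)
  then obtain p where p: "p \<in> topspace X" "p \<notin> \<Union>C"
    using assms(5) by blast
  have x: "x \<in> \<Inter>C" "x \<in> \<Union>C"
    using C assms(3) by blast+
  then have "p \<noteq> x"
    using p(2) by blast
  have "\<Union>C \<subseteq> kappa X x p"
    using C p(2) unfolding kappa_def by blast
  then have "X closure_of \<Union>C \<subseteq> X closure_of kappa X x p"
    by (rule closure_of_mono)
  moreover have "X closure_of kappa X x p \<noteq> topspace X"
    using assms(2) p(1) \<open>p \<noteq> x\<close> unfolding coastal_at_def by blast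
  ultimately show "X closure_of \<Union>C \<noteq> topspace X"
    using closure_of_subset_topspace[of X "kappa X x p"] by blast
  have "connectedin X (\<Union>C)"
    using C x(1) by (intro connectedin_Union) (auto simp: subcontinuum_def)
  then have "connectedin X (X closure_of \<Union>C)"
    by (rule connectedin_closure_of)
  moreover have "compactin X (X closure_of \<Union>C)"
    by (rule closedin_compact_space[OF assms(1) closedin_closure_of])
  moreover have "X closure_of \<Union>C \<noteq> {}"
    using x(2) closure_of_subset[OF sub] by blast
  ultimately show "subcontinuum X (X closure_of \<Union>C)"
    unfolding subcontinuum_def by blast
qed

lemma closure_Union_chain_interior_bound:
  assumes X: "compact_space X" and "\<not> coastal_at X x" "chain\<^sub>\<subseteq> C" "C \<noteq> {}"
    and C: "C \<subseteq> {N. subcontinuum X N \<and> N \<noteq> topspace X \<and> x \<in> N}"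
    and inside: "\<And>c. c \<in> C \<Longrightarrow> \<exists>a\<in>C. c \<subseteq> X interior_of a"
  shows "X closure_of \<Union>C \<in> {N. subcontinuum X N \<and> N \<noteq> topspace X \<and> x \<in> N}"
    and "\<forall>c\<in>C. c \<subseteq> X interior_of (X closure_of \<Union>C)"
proof -
  have "\<Union>C \<subseteq> topspace X"
    using C by (blast dest: subcontinuum_subset_topspace)
  then have sub: "\<Union>C \<subseteq> X closure_of \<Union>C" "\<Union>C \<subseteq> topspace X"
    using closure_of_subset[of "\<Union>C" X] by auto
  have "c \<subset> topspace X" if "c \<in> C" for c
    using that sub(2) C by blast
  then have "\<Union>C \<noteq> topspace X"
    by (rule Union_chain_neq_topspace[OF X assms(3,4) _ inside])
  then show "X closure_of \<Union>C \<in> {N. subcontinuum X N \<and> N \<noteq> topspace X \<and> x \<in> N}"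
    using closure_Union_proper_subcontinua[OF X assms(2,4) C] assms(4) C sub(1) by blast
  show "\<forall>c\<in>C. c \<subseteq> X interior_of (X closure_of \<Union>C)"
  proof
    fix c assume "c \<in> C"
    then obtain a where "a \<in> C" "c \<subseteq> X interior_of a"
      using inside by blast
    then show "c \<subseteq> X interior_of (X closure_of \<Union>C)"
      using interior_of_mono[of a "X closure_of \<Union>C" X] sub(1) by blast
  qed
qed

definition interior_le :: "'a topology \<Rightarrow> 'a set \<Rightarrow> 'a set \<Rightarrow> bool" where
  "interior_le X a b \<longleftrightarrow> a = b \<or> a \<subseteq> X interior_of b"

lemma interior_le_imp_subset: "interior_le X a b \<Longrightarrow> a \<subseteq> b"
  using interior_of_subset[of X b] unfolding interior_le_def by blast

lemma interior_le_trans: "interior_le X a b \<Longrightarrow> interior_le X b c \<Longrightarrow> interior_le X a c"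
  using interior_of_subset[of X b] unfolding interior_le_def by blast

lemma partial_order_on_interior_le: "partial_order_on F (relation_of (interior_le X) F)"
  unfolding partial_order_on_def preorder_on_def
proof (intro conjI)
  show "relation_of (interior_le X) F \<subseteq> F \<times> F"
    by (auto simp: relation_of_def)
  show "refl_on F (relation_of (interior_le X) F)"
    by (auto simp: refl_on_def relation_of_def interior_le_def)
  show "trans (relation_of (interior_le X) F)"
    using interior_le_trans by (auto simp: trans_def relation_of_def)
  show "antisym (relation_of (interior_le X) F)"
    using interior_le_imp_subset by (auto simp: antisym_def relation_of_def)
qed

lemma chain_proper_subcontinua_upper_bound:
  assumes "continuum X" "x \<in> topspace X" "\<not> coastal_at X x"
    and F: "F = {N. subcontinuum X N \<and> N \<noteq> topspace X \<and> x \<in> N}"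
    and chain: "C \<in> Chains (relation_of (interior_le X) F)"
  shows "\<exists>u\<in>F. \<forall>c\<in>C. interior_le X c u"
proof -
  have CF: "C \<subseteq> F" and total: "\<forall>a\<in>C. \<forall>b\<in>C. interior_le X a b \<or> interior_le X b a"
    using chain unfolding Chains_def relation_of_def by auto
  have "\<exists>a\<in>C. c \<subseteq> X interior_of a"
    if c: "c \<in> C" and no_max: "\<not> (\<exists>u\<in>C. \<forall>a\<in>C. interior_le X a u)" for c
  proof -
    obtain a where "a \<in> C" "\<not> interior_le X a c"
      using c no_max by blast
    then show ?thesis
      using total c unfolding interior_le_def by blast
  qed
  then consider "C = {}" | "\<exists>u\<in>C. \<forall>a\<in>C. interior_le X a u"
    | "C \<noteq> {}" "\<And>c. c \<in> C \<Longrightarrow> \<exists>a\<in>C. c \<subseteq> X interior_of a"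
    by blast
  then show ?thesis
  proof cases
    case 1
    obtain y where "y \<in> topspace X" "y \<noteq> x"
      using assms(1) unfolding continuum_def by blast
    then have "{x} \<in> F"
      using assms(2) by (auto simp: F subcontinuum_def)
    then show ?thesis
      using 1 by blast
  next
    case 2
    then show ?thesis
      using CF by blast
  next
    case 3
    have "chain\<^sub>\<subseteq> C"
      using total interior_le_imp_subset unfolding chain_subset_def by blast
    moreover have "compact_space X"
      using assms(1) by (simp add: continuum_def)
    ultimately show ?thesis
      using closure_Union_chain_interior_bound[OF _ assms(3) _ 3(1) CF[unfolded F] 3(2)]
      unfolding F interior_le_def by blast
  qed
qed

lemma proper_subcontinuum_not_openin:
  assumes "connected_space X" "Hausdorff_space X" "subcontinuum X M" "M \<noteq> topspace X"
  shows "\<not> openin X M"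
proof
  assume "openin X M"
  then have "M = {} \<or> M = topspace X"
    using assms(1) subcontinuum_imp_closedin[OF assms(2,3)] unfolding connected_space_clopen_in by blast
  then show False
    using assms(3,4) unfolding subcontinuum_def by blast
qed

lemma exists_subcontinuum_not_in_interior:
  assumes "continuum X" "x \<in> topspace X" "\<not> coastal_at X x"
  shows "\<exists>M. subcontinuum X M \<and> M \<noteq> topspace X \<and> x \<in> M \<and>
           (\<forall>N. subcontinuum X N \<and> N \<noteq> topspace X \<longrightarrow> \<not> M \<subseteq> X interior_of N)"
proof -
  define F where "F = {N. subcontinuum X N \<and> N \<noteq> topspace X \<and> x \<in> N}"
  obtain M where M: "M \<in> F" and maximal: "\<And>N. N \<in> F \<Longrightarrow> interior_le X M N \<Longrightarrow> N = M"
    using predicate_Zorn[OF partial_order_on_interior_le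
        chain_proper_subcontinua_upper_bound[OF assms F_def]] by blast
  have "\<not> M \<subseteq> X interior_of N" if N: "subcontinuum X N" "N \<noteq> topspace X" for N
  proof
    assume inside: "M \<subseteq> X interior_of N"
    then have "N \<in> F"
      using M N interior_of_subset[of X N] unfolding F_def by blast
    then have "N = M"
      using maximal inside unfolding interior_le_def by blast
    then have "openin X M"
      using inside interior_of_subset[of X M] interior_of_eq[of X M] by blast
    then show False
      using proper_subcontinuum_not_openin[of X M] assms(1) M
      unfolding continuum_def F_def by blast
  qed
  then show ?thesis
    using M unfolding F_def by blast
qed

theorem mainTheorem12:
  fixes X :: "'a topology"
  assumes "continuum X" and "\<not> coastal X"
  shows "\<exists>(Y :: 'a set topology) y. continuum Y \<and> y \<in> topspace Y \<and>
           null_aposyndetic Y y \<and> \<not> coastal_at Y y"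
proof -
  have X: "compact_space X" "Hausdorff_space X"
    using assms(1) by (auto simp: continuum_def)
  obtain x where x: "x \<in> topspace X" "\<not> coastal_at X x"
    using assms(2) unfolding coastal_def by blast
  obtain M where M: "subcontinuum X M" "M \<noteq> topspace X" "x \<in> M"
    and not_inside: "\<And>N. subcontinuum X N \<Longrightarrow> N \<noteq> topspace X \<Longrightarrow> \<not> M \<subseteq> X interior_of N"
    using exists_subcontinuum_not_in_interior[OF assms(1) x] by blast
  let ?Y = "quotient_topology X (collapse M)"
  have "continuum ?Y"
    by (rule continuum_collapse[OF assms(1) M(1,2)])
  moreover have "null_aposyndetic ?Y M"
    by (rule null_aposyndetic_collapse[OF X M(1) not_inside])
  moreover have "\<not> coastal_at ?Y M"
    by (rule not_coastal_at_collapse[OF X M(1,3) x(2)])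
  ultimately show ?thesis
    unfolding null_aposyndetic_def by blast
qed

end
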